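(* For every QPTL formula $\varphi$ and every hyperassignment $\mathcal X\in\mathrm{HAsg}_\supseteq(\mathrm{free}(\varphi))$: (1) $\mathcal X\models^{\exists\forall}\varphi$ iff there exists $X\in\mathcal X$ such that $\chi\models\varphi$ for all $\chi\in X$; (2) $\mathcal X\models^{\forall\exists}\varphi$ iff for every $X\in\mathcal X$ there is $\chi\in X$ with $\chi\models\varphi$, where on the right-hand sides $\models$ is the Tarski semantics.
   Context: Let $AP$ be a set of atomic propositions and $\mathbb B=\{\top,\bot\}$. A temporal valuation is a function $f:\mathbb N\to\mathbb B$. An assignment is a partial function $\chi:AP\rightharpoonup(\mathbb N\to\mathbb B)$; $\mathrm{Asg}$ is the set of all assignments, $\mathrm{Asg}(P)$ the set of assignments with domain exactly $P\subseteq AP$, and $\mathrm{Asg}_\supseteq(P)$ the set of assignments whose domain contains $P$. For an assignment $\chi$, $p\in AP$ and a temporal valuation $f$, $\chi[p\mapsto f]$ is the assignment that agrees with $\chi$ except that it maps $p$ to $f$. Tarski semantics of QPTL (formulas $\varphi::=\psi\mid\neg\varphi\mid\varphi\wedge\varphi\mid\varphi\vee\varphi\mid\exists p.\varphi\mid\forall p.\varphi$, $\psi$ LTL), for $\chi\in\mathrm{Asg}_\supseteq(\mathrm{free}(\varphi))$: $\chi\models\psi$ iff $\chi\models_{LTL}\psi$ (see below); Boolean connectives as usual; $\chi\models\exists p.\phi$ iff $\chi[p\mapsto f]\models\phi$ for some temporal valuation $f$; $\chi\models\forall p.\phi$ iff for all $f$. A hyperassignment is a set $\mathcal X$ with $\emptyset\neq\mathcal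 X\subseteq 2^{\mathrm{Asg}(P)}$ and $\emptyset\notin\mathcal X$, for some $P\subseteq AP$; this $P$ is denoted $\mathrm{ap}(\mathcal X)$. $\mathrm{HAsg}$ is the set of all hyperassignments, $\mathrm{HAsg}(P)$ those with $\mathrm{ap}(\mathcal X)=P$, and $\mathrm{HAsg}_\supseteq(P)$ those with $\mathrm{ap}(\mathcal X)\supseteq P$. A choice function for $\mathcal X$ is a map $c:\mathcal X\to\mathrm{Asg}$ with $c(X)\in X$ for all $X\in\mathcal X$. The dual of $\mathcal X$ is $\overline{\mathcal X}=\{\mathrm{img}(c): c\text{ a choice function for }\mathcal X\}$. $\mathrm{par}(\mathcal X)$ is the set of pairs $(\mathcal X_1,\mathcal X_2)$ of (possibly empty) subsets of $\mathcal X$ with $\mathcal X_1\cap\mathcal X_2=\emptyset$ and $\mathcal X_1\cup\mathcal X_2=\mathcal X$. A functor over $P\subseteq AP$ is a function $F:\mathrm{Asg}(P)\to(\mathbb N\to\mathbb B)$; $\mathrm{Fnc}(P)$ is the set of all functors over $P$. For $\chi\in\mathrm{Asg}(P)$, $F\in\mathrm{Fnc}(P)$ and $p\in AP$, $\mathrm{ext}(\chi,F,p)=\chi[p\mapsto F(\chi)]$; for $X\subseteq\mathrm{Asg}(P)$, $\mathrm{ext}(X,F,p)=\{\mathrm{ext}(\chi,F,p):\chi\in X\}$; for a hyperassignment $\mathcal X$, $\mathrm{ext}(\mathcal X,p)=\{\mathrm{ext}(X,F,p):X\in\mathcal X,\ F\in\mathrm{Fnc}(\mathrm{ap}(\mathcal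 X))\}$. $\chi\models_{LTL}\psi$ iff the infinite word whose $t$-th letter is the valuation $q\mapsto\chi(q)(t)$ satisfies the LTL formula $\psi$ in the standard sense. Alternation flags are $\exists\forall$ and $\forall\exists$; $\bar\alpha$ denotes the flag different from $\alpha$. Alternating Hodges semantics of QPTL: for a QPTL formula $\varphi$, $\mathcal X\in\mathrm{HAsg}_\supseteq(\mathrm{free}(\varphi))$ and flag $\alpha$, $\mathcal X\models^\alpha\varphi$ is defined inductively: (1) for LTL $\psi$: $\mathcal X\models^{\exists\forall}\psi$ iff there is $X\in\mathcal X$ with $\chi\models_{LTL}\psi$ for all $\chi\in X$; $\mathcal X\models^{\forall\exists}\psi$ iff for every $X\in\mathcal X$ there is $\chi\in X$ with $\chi\models_{LTL}\psi$; (2) $\mathcal X\models^\alpha\neg\phi$ iff not $\mathcal X\models^{\bar\alpha}\phi$; (3) $\mathcal X\models^{\exists\forall}\phi_1\wedge\phi_2$ iff for every $(\mathcal X_1,\mathcal X_2)\in\mathrm{par}(\mathcal X)$, either ($\mathcal X_1\ne\emptyset$ and $\mathcal X_1\models^{\exists\forall}\phi_1$) or ($\mathcal X_2\ne\emptyset$ and $\mathcal X_2\models^{\exists\forall}\phi_2$); $\mathcal X\models^{\forall\exists}\phi_1\wedge\phi_2$ iff $\overline{\mathcal X}\models^{\exists\forall}\phi_1\wedge\phi_2$; (4) $\mathcal X\models^{\forall\exists}\phi_1\vee\phi_2$ iff there is $(\mathcal X_1,\mathcal X_2)\in\mathrm{par}(\mathcal X)$ such that ($\mathcal X_1\neq\emptyset$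 implies $\mathcal X_1\models^{\forall\exists}\phi_1$) and ($\mathcal X_2\neq\emptyset$ implies $\mathcal X_2\models^{\forall\exists}\phi_2$); $\mathcal X\models^{\exists\forall}\phi_1\vee\phi_2$ iff $\overline{\mathcal X}\models^{\forall\exists}\phi_1\vee\phi_2$; (5) $\mathcal X\models^{\exists\forall}\exists p.\phi$ iff $\mathrm{ext}(\mathcal X,p)\models^{\exists\forall}\phi$; $\mathcal X\models^{\forall\exists}\exists p.\phi$ iff $\overline{\mathcal X}\models^{\exists\forall}\exists p.\phi$; (6) $\mathcal X\models^{\forall\exists}\forall p.\phi$ iff $\mathrm{ext}(\mathcal X,p)\models^{\forall\exists}\phi$; $\mathcal X\models^{\exists\forall}\forall p.\phi$ iff $\overline{\mathcal X}\models^{\forall\exists}\forall p.\phi$. *)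

theory Defs
  imports Main
begin

datatype 'ap ltl =
    LTrue
  | LProp 'ap
  | LNot "'ap ltl"
  | LAnd "'ap ltl" "'ap ltl"
  | LOr "'ap ltl" "'ap ltl"
  | LNext "'ap ltl"
  | LUntil "'ap ltl" "'ap ltl"

fun ltl_props :: "'ap ltl \<Rightarrow> 'ap set" where
  "ltl_props LTrue = {}"
| "ltl_props (LProp p) = {p}"
| "ltl_props (LNot a) = ltl_props a"
| "ltl_props (LAnd a b) = ltl_props a \<union> ltl_props b"
| "ltl_props (LOr a b) = ltl_props a \<union> ltl_props b"
| "ltl_props (LNext a) = ltl_props a"
| "ltl_props (LUntil a b) = ltl_props a \<union> ltl_props b"

fun ltl_word_sat :: "(nat \<Rightarrow> 'ap \<Rightarrow> bool) \<Rightarrow> nat \<Rightarrow> 'ap ltl \<Rightarrow> bool" where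
  "ltl_word_sat w i LTrue = True"
| "ltl_word_sat w i (LProp p) = w i p"
| "ltl_word_sat w i (LNot a) = (\<not> ltl_word_sat w i a)"
| "ltl_word_sat w i (LAnd a b) = (ltl_word_sat w i a \<and> ltl_word_sat w i b)"
| "ltl_word_sat w i (LOr a b) = (ltl_word_sat w i a \<or> ltl_word_sat w i b)"
| "ltl_word_sat w i (LNext a) = ltl_word_sat w (Suc i) a"
| "ltl_word_sat w i (LUntil a b) =
     (\<exists>k\<ge>i. ltl_word_sat w k b \<and> (\<forall>j. i \<le> j \<and> j < k \<longrightarrow> ltl_word_sat w j a))"

type_synonym tval = "nat \<Rightarrow> bool"
type_synonym 'ap asg = "'ap \<rightharpoonup> tval"

definition Asg :: "'ap set \<Rightarrow> 'ap asg set" where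
  "Asg P = {\<chi>. dom \<chi> = P}"

text \<open>The word of an assignment: the t-th letter is q \<mapsto> \<chi>(q)(t)
  (propositions outside the domain are never consulted when the domain covers the
  free propositions; they are set to False).\<close>
definition asg_word :: "'ap asg \<Rightarrow> nat \<Rightarrow> 'ap \<Rightarrow> bool" where
  "asg_word \<chi> t q = (case \<chi> q of Some f \<Rightarrow> f t | None \<Rightarrow> False)"

definition ltl_sat :: "'ap asg \<Rightarrow> 'ap ltl \<Rightarrow> bool" where
  "ltl_sat \<chi> \<psi> = ltl_word_sat (asg_word \<chi>) 0 \<psi>"

datatype 'ap qptl =
    QLTL "'ap ltl"
  | QNot "'ap qptl"
  | QAnd "'ap qptl" "'ap qptl"
  | QOr "'ap qptl" "'ap qptl"
  | QEx 'ap "'ap qptl"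
  | QAll 'ap "'ap qptl"

fun free :: "'ap qptl \<Rightarrow> 'ap set" where
  "free (QLTL \<psi>) = ltl_props \<psi>"
| "free (QNot a) = free a"
| "free (QAnd a b) = free a \<union> free b"
| "free (QOr a b) = free a \<union> free b"
| "free (QEx p a) = free a - {p}"
| "free (QAll p a) = free a - {p}"

fun tsat :: "'ap asg \<Rightarrow> 'ap qptl \<Rightarrow> bool" where
  "tsat \<chi> (QLTL \<psi>) = ltl_sat \<chi> \<psi>"
| "tsat \<chi> (QNot a) = (\<not> tsat \<chi> a)"
| "tsat \<chi> (QAnd a b) = (tsat \<chi> a \<and> tsat \<chi> b)"
| "tsat \<chi> (QOr a b) = (tsat \<chi> a \<or> tsat \<chi> b)"
| "tsat \<chi> (QEx p a) = (\<exists>f. tsat (\<chi>(p \<mapsto> f)) a)"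
| "tsat \<chi> (QAll p a) = (\<forall>f. tsat (\<chi>(p \<mapsto> f)) a)"

definition is_hasg :: "'ap set \<Rightarrow> 'ap asg set set \<Rightarrow> bool" where
  "is_hasg P \<X> \<longleftrightarrow> \<X> \<noteq> {} \<and> \<X> \<subseteq> Pow (Asg P) \<and> {} \<notin> \<X>"

definition HAsg :: "'ap asg set set set" where
  "HAsg = {\<X>. \<exists>P. is_hasg P \<X>}"

definition ap :: "'ap asg set set \<Rightarrow> 'ap set" where
  "ap \<X> = (THE P. is_hasg P \<X>)"

definition HAsg_sup :: "'ap set \<Rightarrow> 'ap asg set set set" where
  "HAsg_sup P = {\<X>. \<X> \<in> HAsg \<and> P \<subseteq> ap \<X>}"

definition is_choice :: "'ap asg set set \<Rightarrow> ('ap asg set \<Rightarrow> 'ap asg) \<Rightarrow> bool" where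
  "is_choice \<X> c \<longleftrightarrow> (\<forall>X\<in>\<X>. c X \<in> X)"

definition dual :: "'ap asg set set \<Rightarrow> 'ap asg set set" where
  "dual \<X> = {c ` \<X> | c. is_choice \<X> c}"

definition par :: "'a set \<Rightarrow> ('a set \<times> 'a set) set" where
  "par \<X> = {(\<X>1, \<X>2). \<X>1 \<inter> \<X>2 = {} \<and> \<X>1 \<union> \<X>2 = \<X>}"

text \<open>Functors over P: maps from Asg(P) to temporal valuations, represented as
  HOL functions that are fixed (undefined) outside Asg(P).\<close>
definition Fnc :: "'ap set \<Rightarrow> ('ap asg \<Rightarrow> tval) set" where
  "Fnc P = {F. \<forall>\<chi>. \<chi> \<notin> Asg P \<longrightarrow> F \<chi> = undefined}"

definition ext_asg :: "'ap asg \<Rightarrow> ('ap asg \<Rightarrow> tval) \<Rightarrow> 'ap \<Rightarrow> 'ap asg" where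
  "ext_asg \<chi> F p = \<chi>(p \<mapsto> F \<chi>)"

definition ext_set :: "'ap asg set \<Rightarrow> ('ap asg \<Rightarrow> tval) \<Rightarrow> 'ap \<Rightarrow> 'ap asg set" where
  "ext_set X F p = {ext_asg \<chi> F p | \<chi>. \<chi> \<in> X}"

definition ext_h :: "'ap asg set set \<Rightarrow> 'ap \<Rightarrow> 'ap asg set set" where
  "ext_h \<X> p = {ext_set X F p | X F. X \<in> \<X> \<and> F \<in> Fnc (ap \<X>)}"

datatype flag = EA | AE

fun flip :: "flag \<Rightarrow> flag" where
  "flip EA = AE"
| "flip AE = EA"

text \<open>The dual clauses (e.g. the AE clause for conjunction, defined as the EA clause
  on the dual) are inlined to make the recursion structural on the formula.\<close>
fun hsat :: "flag \<Rightarrow> 'ap qptl \<Rightarrow> 'ap asg set set \<Rightarrow> bool" where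
  "hsat EA (QLTL \<psi>) \<X> = (\<exists>X\<in>\<X>. \<forall>\<chi>\<in>X. ltl_sat \<chi> \<psi>)"
| "hsat AE (QLTL \<psi>) \<X> = (\<forall>X\<in>\<X>. \<exists>\<chi>\<in>X. ltl_sat \<chi> \<psi>)"
| "hsat a (QNot \<phi>) \<X> = (\<not> hsat (flip a) \<phi> \<X>)"
| "hsat EA (QAnd \<phi>1 \<phi>2) \<X> =
     (\<forall>(\<X>1, \<X>2)\<in>par \<X>. (\<X>1 \<noteq> {} \<and> hsat EA \<phi>1 \<X>1) \<or> (\<X>2 \<noteq> {} \<and> hsat EA \<phi>2 \<X>2))"
| "hsat AE (QAnd \<phi>1 \<phi>2) \<X> =
     (\<forall>(\<X>1, \<X>2)\<in>par (dual \<X>). (\<X>1 \<noteq> {} \<and> hsat EA \<phi>1 \<X>1) \<or> (\<X>2 \<noteq> {} \<and> hsat EA \<phi>2 \<X>2))"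
| "hsat AE (QOr \<phi>1 \<phi>2) \<X> =
     (\<exists>(\<X>1, \<X>2)\<in>par \<X>. (\<X>1 \<noteq> {} \<longrightarrow> hsat AE \<phi>1 \<X>1) \<and> (\<X>2 \<noteq> {} \<longrightarrow> hsat AE \<phi>2 \<X>2))"
| "hsat EA (QOr \<phi>1 \<phi>2) \<X> =
     (\<exists>(\<X>1, \<X>2)\<in>par (dual \<X>). (\<X>1 \<noteq> {} \<longrightarrow> hsat AE \<phi>1 \<X>1) \<and> (\<X>2 \<noteq> {} \<longrightarrow> hsat AE \<phi>2 \<X>2))"
| "hsat EA (QEx p \<phi>) \<X> = hsat EA \<phi> (ext_h \<X> p)"
| "hsat AE (QEx p \<phi>) \<X> = hsat EA \<phi> (ext_h (dual \<X>) p)"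
| "hsat AE (QAll p \<phi>) \<X> = hsat AE \<phi> (ext_h \<X> p)"
| "hsat EA (QAll p \<phi>) \<X> = hsat AE \<phi> (ext_h (dual \<X>) p)"

end

theory Submission
  imports Defs
begin

text \<open>Induction on the formula, for both flags at once: every Hodges clause is the
  \<exists>\<forall>- or \<forall>\<exists>-lifting of the Tarski clause. Negation swaps the two liftings, and so
  does passing to the dual, because a choice function picks one witness from every
  member. An \<exists>\<forall> conjunction is refuted by the partition into the members failing the
  first conjunct and the rest; disjunction is the dual case. For the quantifiers, a
  functor chooses a witnessing valuation for all assignments of a member at once.\<close>

fun lifted :: "flag \<Rightarrow> ('a \<Rightarrow> bool) \<Rightarrow> 'a set set \<Rightarrow> bool" where
  "lifted EA Q \<X> = (\<exists>X\<in>\<X>. \<forall>x\<in>X. Q x)"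
| "lifted AE Q \<X> = (\<forall>X\<in>\<X>. \<exists>x\<in>X. Q x)"

lemma lifted_not: "lifted \<alpha> (\<lambda>x. \<not> Q x) \<X> = (\<not> lifted (flip \<alpha>) Q \<X>)"
  by (cases \<alpha>) auto

lemma lifted_AE_eq_not_EA: "lifted AE Q \<X> = (\<not> lifted EA (\<lambda>x. \<not> Q x) \<X>)"
  by auto

lemma lifted_EA_dual: "lifted EA Q (dual \<X>) = lifted AE Q \<X>"
proof
  assume "lifted EA Q (dual \<X>)"
  then show "lifted AE Q \<X>" unfolding dual_def is_choice_def by auto
next
  assume "lifted AE Q \<X>"
  define c where "c X = (SOME x. x \<in> X \<and> Q x)" for X :: "'a asg set"
  have "\<forall>X\<in>\<X>. c X \<in> X \<and> Q (c X)"
    using \<open>lifted AE Q \<X>\<close> unfolding c_def by (metis (mono_tags, lifting) lifted.simps(2) someI_ex)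
  then have "c ` \<X> \<in> dual \<X>" "\<forall>\<chi>\<in>c ` \<X>. Q \<chi>" unfolding dual_def is_choice_def by auto
  then show "lifted EA Q (dual \<X>)" unfolding lifted.simps by blast
qed

lemma lifted_dual: "lifted \<alpha> Q (dual \<X>) = lifted (flip \<alpha>) Q \<X>"
proof (cases \<alpha>)
  case EA
  then show ?thesis using lifted_EA_dual[of Q \<X>] by simp
next
  case AE
  then show ?thesis
    using lifted_EA_dual[of "\<lambda>x. \<not> Q x" \<X>]
    by (simp add: lifted_AE_eq_not_EA del: lifted.simps)
qed

lemma lifted_EA_and_par:
  assumes "\<And>\<Y>. \<Y> \<subseteq> \<X> \<Longrightarrow> \<Y> \<noteq> {} \<Longrightarrow> H1 \<Y> = lifted EA Q1 \<Y>"
    and "\<And>\<Y>. \<Y> \<subseteq> \<X> \<Longrightarrow> \<Y> \<noteq> {} \<Longrightarrow> H2 \<Y> = lifted EA Q2 \<Y>"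
  shows "(\<forall>(\<X>1, \<X>2)\<in>par \<X>. (\<X>1 \<noteq> {} \<and> H1 \<X>1) \<or> (\<X>2 \<noteq> {} \<and> H2 \<X>2))
     \<longleftrightarrow> lifted EA (\<lambda>x. Q1 x \<and> Q2 x) \<X>"
proof
  assume split: "\<forall>(\<X>1, \<X>2)\<in>par \<X>. (\<X>1 \<noteq> {} \<and> H1 \<X>1) \<or> (\<X>2 \<noteq> {} \<and> H2 \<X>2)"
  define Fail1 where "Fail1 = {X\<in>\<X>. \<not> (\<forall>x\<in>X. Q1 x)}"
  have "(Fail1, \<X> - Fail1) \<in> par \<X>" unfolding par_def Fail1_def by auto
  with split have "(Fail1 \<noteq> {} \<and> H1 Fail1) \<or> (\<X> - Fail1 \<noteq> {} \<and> H2 (\<X> - Fail1))" by auto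
  moreover have "\<not> (Fail1 \<noteq> {} \<and> H1 Fail1)"
    using assms(1)[of Fail1] unfolding Fail1_def by auto
  ultimately have "\<X> - Fail1 \<noteq> {}" "H2 (\<X> - Fail1)" by auto
  then have "lifted EA Q2 (\<X> - Fail1)" using assms(2)[of "\<X> - Fail1"] by simp
  then obtain X where "X \<in> \<X>" "X \<notin> Fail1" "\<forall>x\<in>X. Q2 x" by auto
  then show "lifted EA (\<lambda>x. Q1 x \<and> Q2 x) \<X>" unfolding Fail1_def by auto
next
  assume "lifted EA (\<lambda>x. Q1 x \<and> Q2 x) \<X>"
  then obtain X where X: "X \<in> \<X>" "\<forall>x\<in>X. Q1 x \<and> Q2 x" by auto
  have "(\<X>1 \<noteq> {} \<and> H1 \<X>1) \<or> (\<X>2 \<noteq> {} \<and> H2 \<X>2)" if "(\<X>1, \<X>2) \<in> par \<X>" for \<X>1 \<X>2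
  proof -
    from that have sub: "\<X>1 \<subseteq> \<X>" "\<X>2 \<subseteq> \<X>" and "X \<in> \<X>1 \<or> X \<in> \<X>2"
      using X(1) unfolding par_def by auto
    then show "(\<X>1 \<noteq> {} \<and> H1 \<X>1) \<or> (\<X>2 \<noteq> {} \<and> H2 \<X>2)"
    proof (elim disjE)
      assume "X \<in> \<X>1"
      with X(2) have "\<X>1 \<noteq> {}" "lifted EA Q1 \<X>1" by auto
      with assms(1)[OF sub(1)] show ?thesis by simp
    next
      assume "X \<in> \<X>2"
      with X(2) have "\<X>2 \<noteq> {}" "lifted EA Q2 \<X>2" by auto
      with assms(2)[OF sub(2)] show ?thesis by simp
    qed
  qed
  then show "\<forall>(\<X>1, \<X>2)\<in>par \<X>. (\<X>1 \<noteq> {} \<and> H1 \<X>1) \<or> (\<X>2 \<noteq> {} \<and> H2 \<X>2)"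
    by auto
qed

lemma lifted_AE_or_par:
  assumes "\<And>\<Y>. \<Y> \<subseteq> \<X> \<Longrightarrow> \<Y> \<noteq> {} \<Longrightarrow> H1 \<Y> = lifted AE Q1 \<Y>"
    and "\<And>\<Y>. \<Y> \<subseteq> \<X> \<Longrightarrow> \<Y> \<noteq> {} \<Longrightarrow> H2 \<Y> = lifted AE Q2 \<Y>"
  shows "(\<exists>(\<X>1, \<X>2)\<in>par \<X>. (\<X>1 \<noteq> {} \<longrightarrow> H1 \<X>1) \<and> (\<X>2 \<noteq> {} \<longrightarrow> H2 \<X>2))
     \<longleftrightarrow> lifted AE (\<lambda>x. Q1 x \<or> Q2 x) \<X>"
proof -
  have "(\<forall>(\<X>1, \<X>2)\<in>par \<X>. (\<X>1 \<noteq> {} \<and> \<not> H1 \<X>1) \<or> (\<X>2 \<noteq> {} \<and> \<not> H2 \<X>2))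
     \<longleftrightarrow> lifted EA (\<lambda>x. \<not> Q1 x \<and> \<not> Q2 x) \<X>"
    by (rule lifted_EA_and_par) (simp_all add: assms lifted_not)
  then show ?thesis
    using lifted_not[of EA "\<lambda>x. Q1 x \<or> Q2 x" \<X>] by auto
qed

lemma is_hasg_unique:
  assumes "is_hasg P \<X>" and "is_hasg Q \<X>"
  shows "P = Q"
proof -
  obtain X where "X \<in> \<X>" using assms(1) unfolding is_hasg_def by blast
  then have "X \<noteq> {}" "X \<subseteq> Asg P" "X \<subseteq> Asg Q" using assms unfolding is_hasg_def by auto
  then obtain \<chi> where "\<chi> \<in> Asg P" "\<chi> \<in> Asg Q" by blast
  then show ?thesis unfolding Asg_def by simp
qed

lemma ap_eqI: "is_hasg P \<X> \<Longrightarrow> ap \<X> = P"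
  unfolding ap_def by (rule the_equality) (assumption, rule is_hasg_unique)

lemma is_hasg_subset: "is_hasg P \<X> \<Longrightarrow> \<Y> \<subseteq> \<X> \<Longrightarrow> \<Y> \<noteq> {} \<Longrightarrow> is_hasg P \<Y>"
  unfolding is_hasg_def by blast

lemma is_hasg_dual:
  assumes "is_hasg P \<X>"
  shows "is_hasg P (dual \<X>)"
proof -
  have "is_choice \<X> (\<lambda>X. SOME \<chi>. \<chi> \<in> X)"
    using assms unfolding is_choice_def is_hasg_def by (metis some_in_eq)
  then have "dual \<X> \<noteq> {}" unfolding dual_def by blast
  moreover have "dual \<X> \<subseteq> Pow (Asg P)" "{} \<notin> dual \<X>"
    using assms unfolding dual_def is_hasg_def is_choice_def by blast+
  ultimately show ?thesis unfolding is_hasg_def by blast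
qed

lemma is_hasg_ext_h:
  assumes "is_hasg P \<X>"
  shows "is_hasg (insert p P) (ext_h \<X> p)"
proof -
  have "(\<lambda>_. undefined) \<in> Fnc (ap \<X>)" unfolding Fnc_def by simp
  moreover obtain X where "X \<in> \<X>" using assms unfolding is_hasg_def by auto
  ultimately have "ext_h \<X> p \<noteq> {}" unfolding ext_h_def by blast
  moreover have "\<forall>X\<in>\<X>. X \<noteq> {} \<and> X \<subseteq> Asg P" using assms unfolding is_hasg_def by auto
  then have "\<forall>Y\<in>ext_h \<X> p. Y \<noteq> {} \<and> Y \<subseteq> Asg (insert p P)"
    unfolding ext_h_def ext_set_def ext_asg_def Asg_def by fastforce
  ultimately show ?thesis unfolding is_hasg_def by blast
qed

lemma lifted_EA_ext_h:
  assumes "is_hasg P \<X>"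
  shows "lifted EA Q (ext_h \<X> p) = lifted EA (\<lambda>\<chi>. \<exists>f. Q (\<chi>(p \<mapsto> f))) \<X>"
proof
  assume "lifted EA Q (ext_h \<X> p)"
  then obtain X F where "X \<in> \<X>" "\<forall>\<chi>\<in>ext_set X F p. Q \<chi>" unfolding ext_h_def by auto
  then show "lifted EA (\<lambda>\<chi>. \<exists>f. Q (\<chi>(p \<mapsto> f))) \<X>"
    unfolding ext_set_def ext_asg_def by auto
next
  assume "lifted EA (\<lambda>\<chi>. \<exists>f. Q (\<chi>(p \<mapsto> f))) \<X>"
  then obtain X where X: "X \<in> \<X>" "\<forall>\<chi>\<in>X. \<exists>f. Q (\<chi>(p \<mapsto> f))" by auto
  define F where "F \<chi> = (if \<chi> \<in> Asg P then SOME f. Q (\<chi>(p \<mapsto> f)) else undefined)" for \<chi>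
  have "F \<in> Fnc (ap \<X>)" using ap_eqI[OF assms] unfolding Fnc_def F_def by simp
  then have "ext_set X F p \<in> ext_h \<X> p" using X(1) unfolding ext_h_def by auto
  moreover have "X \<subseteq> Asg P" using assms X(1) unfolding is_hasg_def by auto
  then have "\<forall>\<chi>\<in>X. Q (\<chi>(p \<mapsto> F \<chi>))"
    using X(2) unfolding F_def by (metis (mono_tags, lifting) someI_ex subsetD)
  then have "\<forall>\<chi>\<in>ext_set X F p. Q \<chi>" unfolding ext_set_def ext_asg_def by auto
  ultimately show "lifted EA Q (ext_h \<X> p)" by auto
qed

lemma lifted_AE_ext_h:
  assumes "is_hasg P \<X>"
  shows "lifted AE Q (ext_h \<X> p) = lifted AE (\<lambda>\<chi>. \<forall>f. Q (\<chi>(p \<mapsto> f))) \<X>"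
  unfolding lifted_AE_eq_not_EA by (simp add: lifted_EA_ext_h[OF assms] del: lifted.simps)

lemma hsat_flip_eq_dual:
  "hsat (flip EA) (QAnd \<phi>1 \<phi>2) \<X> = hsat EA (QAnd \<phi>1 \<phi>2) (dual \<X>)"
  "hsat (flip AE) (QOr \<phi>1 \<phi>2) \<X> = hsat AE (QOr \<phi>1 \<phi>2) (dual \<X>)"
  "hsat (flip EA) (QEx p \<phi>) \<X> = hsat EA (QEx p \<phi>) (dual \<X>)"
  "hsat (flip AE) (QAll p \<phi>) \<X> = hsat AE (QAll p \<phi>) (dual \<X>)"
  by simp_all

lemma hsat_eq_lifted_via_dual:
  assumes "\<And>P \<Y>. is_hasg P \<Y> \<Longrightarrow> hsat \<alpha> \<phi> \<Y> = lifted \<alpha> Q \<Y>"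
    and "\<And>\<Y>. hsat (flip \<alpha>) \<phi> \<Y> = hsat \<alpha> \<phi> (dual \<Y>)"
    and "is_hasg P \<X>"
  shows "hsat \<beta> \<phi> \<X> = lifted \<beta> Q \<X>"
proof (cases "\<beta> = \<alpha>")
  case True
  then show ?thesis using assms(1)[OF assms(3)] by simp
next
  case False
  then have flipped: "\<beta> = flip \<alpha>" by (cases \<alpha>; cases \<beta>) simp_all
  then have "hsat \<beta> \<phi> \<X> = hsat \<alpha> \<phi> (dual \<X>)" using assms(2) by simp
  also have "\<dots> = lifted \<alpha> Q (dual \<X>)" by (rule assms(1)[OF is_hasg_dual[OF assms(3)]])
  also have "\<dots> = lifted \<beta> Q \<X>" unfolding flipped by (rule lifted_dual)
  finally show ?thesis .
qed

lemma hsat_eq_lifted_tsat: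
  "is_hasg P \<X> \<Longrightarrow> hsat \<alpha> \<phi> \<X> = lifted \<alpha> (\<lambda>\<chi>. tsat \<chi> \<phi>) \<X>"
proof (induction \<phi> arbitrary: \<alpha> P \<X>)
  case (QLTL \<psi>)
  then show ?case by (cases \<alpha>) simp_all
next
  case (QNot \<phi>)
  then show ?case by (simp add: lifted_not)
next
  case (QAnd \<phi>1 \<phi>2)
  have "hsat EA (QAnd \<phi>1 \<phi>2) \<Y> = lifted EA (\<lambda>\<chi>. tsat \<chi> (QAnd \<phi>1 \<phi>2)) \<Y>"
    if "is_hasg P' \<Y>" for P' \<Y>
    by (simp only: hsat.simps tsat.simps, rule lifted_EA_and_par)
      (rule QAnd.IH, rule is_hasg_subset[OF that]; assumption)+
  from hsat_eq_lifted_via_dual[OF this hsat_flip_eq_dual(1) QAnd.prems] show ?case .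
next
  case (QOr \<phi>1 \<phi>2)
  have "hsat AE (QOr \<phi>1 \<phi>2) \<Y> = lifted AE (\<lambda>\<chi>. tsat \<chi> (QOr \<phi>1 \<phi>2)) \<Y>"
    if "is_hasg P' \<Y>" for P' \<Y>
    by (simp only: hsat.simps tsat.simps, rule lifted_AE_or_par)
      (rule QOr.IH, rule is_hasg_subset[OF that]; assumption)+
  from hsat_eq_lifted_via_dual[OF this hsat_flip_eq_dual(2) QOr.prems] show ?case .
next
  case (QEx p \<phi>)
  have "hsat EA (QEx p \<phi>) \<Y> = lifted EA (\<lambda>\<chi>. tsat \<chi> (QEx p \<phi>)) \<Y>"
    if "is_hasg P' \<Y>" for P' \<Y>
    using QEx.IH[OF is_hasg_ext_h[OF that]] lifted_EA_ext_h[OF that] by simp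
  from hsat_eq_lifted_via_dual[OF this hsat_flip_eq_dual(3) QEx.prems] show ?case .
next
  case (QAll p \<phi>)
  have "hsat AE (QAll p \<phi>) \<Y> = lifted AE (\<lambda>\<chi>. tsat \<chi> (QAll p \<phi>)) \<Y>"
    if "is_hasg P' \<Y>" for P' \<Y>
    using QAll.IH[OF is_hasg_ext_h[OF that]] lifted_AE_ext_h[OF that] by simp
  from hsat_eq_lifted_via_dual[OF this hsat_flip_eq_dual(4) QAll.prems] show ?case .
qed

theorem mainTheorem5:
  fixes \<phi> :: "'ap qptl" and \<X> :: "'ap asg set set"
  assumes "\<X> \<in> HAsg_sup (free \<phi>)"
  shows "(hsat EA \<phi> \<X> \<longleftrightarrow> (\<exists>X\<in>\<X>. \<forall>\<chi>\<in>X. tsat \<chi> \<phi>))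
       \<and> (hsat AE \<phi> \<X> \<longleftrightarrow> (\<forall>X\<in>\<X>. \<exists>\<chi>\<in>X. tsat \<chi> \<phi>))"
proof -
  from assms obtain P where "is_hasg P \<X>" unfolding HAsg_sup_def HAsg_def by blast
  from hsat_eq_lifted_tsat[OF this, of EA] hsat_eq_lifted_tsat[OF this, of AE]
  show ?thesis by simp
qed

end
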